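(* Let $n \geq 4$ and let $\mathcal G = G(n;S)$ be a circulant graph on $n$ vertices with symbol $S$. Suppose that $\mathcal G$ has at least four distinct eigenvalues and that its spectrum satisfies the following condition: for all eigenvalues $\lambda_i,\lambda_j,\lambda_r,\lambda_s$ of $\mathcal G$ with $\lambda_r \neq \lambda_s$, $$\frac{\lambda_i-\lambda_j}{\lambda_r-\lambda_s}\in\mathbb{Q}.$$ Then $\mathcal G$ is integral, i.e. all eigenvalues of its adjacency matrix are integers.
   Context: For an integer $n$ and a set $S\subseteq\{1,\dots,n-1\}$ such that $s\in S$ if and only if $n-s\in S$, the circulant graph $G(n;S)$ is the undirected graph on vertex set $\mathbb{Z}_n=\{0,1,\dots,n-1\}$ in which $i$ and $j$ are adjacent iff $i-j \bmod n\in S$; $S$ is called the symbol and $\#S$ the degree. The eigenvalues (spectrum) of a graph are the eigenvalues of its adjacency matrix, listed with multiplicity as $\lambda_0,\dots,\lambda_{n-1}$. A graph is integral if all its eigenvalues are integers. *)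

theory Defs
  imports Complex_Main "Jordan_Normal_Form.Char_Poly"
begin

definition circulant_symbol :: "nat \<Rightarrow> nat set \<Rightarrow> bool" where
  "circulant_symbol n S \<longleftrightarrow> S \<subseteq> {1..<n} \<and> (\<forall>s \<in> {1..<n}. s \<in> S \<longleftrightarrow> n - s \<in> S)"

definition circulant_adj :: "nat \<Rightarrow> nat set \<Rightarrow> complex mat" where
  "circulant_adj n S = mat n n (\<lambda>(i, j). if nat ((int i - int j) mod int n) \<in> S then 1 else 0)"

end

theory Submission
  imports Defs
begin

(* The DFT vectors (w^(jk))_k, w = cis (2 pi / n), are eigenvectors of every circulant matrix.
   For G(n;S) with S nonempty, the eigenvalue for j = 0 is the degree |S| and the n DFT
   eigenvalues add up to the trace 0. Fix an eigenvalue k different from |S|. If all ratios of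
   eigenvalue differences are rational, every eigenvalue is |S| + q (k - |S|) with q rational;
   summing over the DFT eigenvalues gives n |S| + q' (k - |S|) = 0 with q' rational, so k - |S|,
   and with it every eigenvalue, is rational. Eigenvalues of integer matrices are algebraic
   integers, hence integers. *)

definition unit_root :: "nat \<Rightarrow> complex" where
  "unit_root n = cis (2 * pi / n)"

lemma unit_root_pow_n: "n > 0 \<Longrightarrow> unit_root n ^ n = 1"
  by (simp add: unit_root_def DeMoivre)

lemma unit_root_pow_mod:
  assumes "n > 0" shows "unit_root n ^ m = unit_root n ^ (m mod n)"
proof -
  have "unit_root n ^ m = unit_root n ^ (n * (m div n) + m mod n)"
    by simp
  also have "\<dots> = (unit_root n ^ n) ^ (m div n) * unit_root n ^ (m mod n)"
    by (simp only: power_add power_mult)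
  finally show ?thesis
    using assms by (simp add: unit_root_pow_n)
qed

lemma unit_root_pow_eq_1_iff:
  assumes "n > 0" shows "unit_root n ^ m = 1 \<longleftrightarrow> n dvd m"
proof
  assume "n dvd m"
  then show "unit_root n ^ m = 1"
    using assms by (simp add: unit_root_pow_mod[of n m])
next
  assume "unit_root n ^ m = 1"
  then have "cos (2 * pi * (real m / real n)) = 1"
    by (simp add: unit_root_def DeMoivre complex_eq_iff mult.commute)
  then obtain k :: int where "2 * pi * (real m / real n) = of_int k * 2 * pi"
    using cos_one_2pi_int by blast
  then have "real m = of_int k * real n"
    using assms by (simp add: field_simps)
  then have "int m = k * int n"
    by (metis of_int_eq_iff of_int_mult of_int_of_nat_eq)
  then show "n dvd m"
    by (metis dvd_triv_right int_dvd_int_iff)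
qed

lemma sum_unit_root_powers:
  assumes "n > 0"
  shows "(\<Sum>j<n. unit_root n ^ (j * m)) = (if n dvd m then of_nat n else 0)"
proof (cases "n dvd m")
  case True
  then have "unit_root n ^ (j * m) = 1" for j
    using assms by (simp add: unit_root_pow_eq_1_iff)
  then show ?thesis
    using True by simp
next
  case False
  then have "unit_root n ^ m \<noteq> 1" "(unit_root n ^ m) ^ n = 1"
    using assms by (simp_all add: unit_root_pow_eq_1_iff flip: power_mult)
  then show ?thesis
    using False by (simp add: geometric_sum mult.commute[of _ m] power_mult)
qed

definition circulant_mat :: "nat \<Rightarrow> (nat \<Rightarrow> 'a) \<Rightarrow> 'a mat" where
  "circulant_mat n c = mat n n (\<lambda>(i, k). c (nat ((int i - int k) mod int n)))"

definition dft_vec :: "nat \<Rightarrow> nat \<Rightarrow> complex vec" where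
  "dft_vec n j = vec n (\<lambda>k. unit_root n ^ (j * k))"

(* The exponent j (n - m) stands for -j m. *)
definition circulant_eigenvalue :: "nat \<Rightarrow> (nat \<Rightarrow> complex) \<Rightarrow> nat \<Rightarrow> complex" where
  "circulant_eigenvalue n c j = (\<Sum>m<n. c m * unit_root n ^ (j * (n - m)))"

lemma sum_circulant_reindex:
  assumes "i < n"
  shows "(\<Sum>k<n. g (nat ((int i - int k) mod int n))) = (\<Sum>m<n. g m)"
  using assms
  by (intro sum.reindex_bij_witness[where i = "\<lambda>m. nat ((int i - int m) mod int n)"
                                    and j = "\<lambda>m. nat ((int i - int m) mod int n)"])
     (auto simp: mod_diff_right_eq nat_less_iff)

lemma circulant_shift_mod:
  assumes "k < n"
  shows "(i + (n - nat ((int i - int k) mod int n))) mod n = k mod n"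
proof -
  define r where "r = (int i - int k) mod int n"
  have "0 \<le> r" "r < int n"
    using assms by (simp_all add: r_def)
  then have "int ((i + (n - nat r)) mod n) = (int i + int n - r) mod int n"
    by (simp add: of_nat_mod)
  also have "\<dots> = (int i + int n - (int i - int k)) mod int n"
    unfolding r_def by (rule mod_diff_right_eq)
  also have "\<dots> = int (k mod n)"
    by (simp add: of_nat_mod)
  finally show ?thesis
    unfolding r_def of_nat_eq_iff .
qed

lemma circulant_mat_mult_dft_vec:
  "circulant_mat n c *\<^sub>v dft_vec n j = circulant_eigenvalue n c j \<cdot>\<^sub>v dft_vec n j"
proof (rule eq_vecI)
  fix i assume "i < dim_vec (circulant_eigenvalue n c j \<cdot>\<^sub>v dft_vec n j)"
  then have i: "i < n" by (simp add: dft_vec_def)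
  let ?\<omega> = "unit_root n"
  let ?\<sigma> = "\<lambda>k. nat ((int i - int k) mod int n)"
  have shift: "?\<omega> ^ (j * k) = ?\<omega> ^ (j * i) * ?\<omega> ^ (j * (n - ?\<sigma> k))" if "k < n" for k
  proof -
    have "(j * (i + (n - ?\<sigma> k))) mod n = (j * ((i + (n - ?\<sigma> k)) mod n)) mod n"
      by (simp add: mod_mult_right_eq)
    also have "\<dots> = (j * k) mod n"
      by (simp add: circulant_shift_mod[OF that] mod_mult_right_eq)
    finally have "?\<omega> ^ (j * k) = ?\<omega> ^ (j * (i + (n - ?\<sigma> k)))"
      using that unit_root_pow_mod[of n] by (metis gr_implies_not0 neq0_conv)
    then show ?thesis
      by (simp add: add_mult_distrib2 power_add)
  qed
  have "(circulant_mat n c *\<^sub>v dft_vec n j) $ i = (\<Sum>k<n. c (?\<sigma> k) * ?\<omega> ^ (j * k))"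
    using i by (simp add: circulant_mat_def dft_vec_def scalar_prod_def atLeast0LessThan)
  also have "\<dots> = ?\<omega> ^ (j * i) * (\<Sum>k<n. c (?\<sigma> k) * ?\<omega> ^ (j * (n - ?\<sigma> k)))"
    unfolding sum_distrib_left by (intro sum.cong refl) (simp add: shift mult.left_commute)
  also have "\<dots> = ?\<omega> ^ (j * i) * circulant_eigenvalue n c j"
    using sum_circulant_reindex[OF i, of "\<lambda>m. c m * ?\<omega> ^ (j * (n - m))"]
    by (simp add: circulant_eigenvalue_def)
  finally show "(circulant_mat n c *\<^sub>v dft_vec n j) $ i = (circulant_eigenvalue n c j \<cdot>\<^sub>v dft_vec n j) $ i"
    using i by (simp add: dft_vec_def mult.commute)
qed (simp add: circulant_mat_def dft_vec_def)

lemma eigenvalue_circulant_mat: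
  assumes "n > 0"
  shows "eigenvalue (circulant_mat n c) (circulant_eigenvalue n c j)"
  unfolding eigenvalue_def eigenvector_def
proof (intro exI conjI)
  show "dft_vec n j \<in> carrier_vec (dim_row (circulant_mat n c))"
    by (simp add: circulant_mat_def dft_vec_def)
  have "dft_vec n j $ 0 = 1"
    using assms by (simp add: dft_vec_def)
  then show "dft_vec n j \<noteq> 0\<^sub>v (dim_row (circulant_mat n c))"
    using assms by (auto simp: circulant_mat_def)
qed (rule circulant_mat_mult_dft_vec)

lemma sum_circulant_eigenvalues:
  assumes "n > 0"
  shows "(\<Sum>j<n. circulant_eigenvalue n c j) = of_nat n * c 0"
proof -
  have "(\<Sum>j<n. circulant_eigenvalue n c j) = (\<Sum>m<n. c m * (\<Sum>j<n. unit_root n ^ (j * (n - m))))"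
    unfolding circulant_eigenvalue_def sum_distrib_left by (rule sum.swap)
  also have "\<dots> = (\<Sum>m<n. if m = 0 then c 0 * of_nat n else 0)"
    using assms by (intro sum.cong) (auto simp: sum_unit_root_powers nat_dvd_not_less)
  finally show ?thesis
    using assms by (simp add: mult.commute)
qed

lemma map_mat_circulant_mat: "map_mat f (circulant_mat n c) = circulant_mat n (f \<circ> c)"
  by (auto simp: circulant_mat_def)

lemma algebraic_int_eigenvalue_of_int_mat:
  fixes B :: "int mat"
  assumes B: "B \<in> carrier_mat n n" and ev: "eigenvalue (map_mat of_int B :: 'a :: field_char_0 mat) k"
  shows "algebraic_int k"
proof (rule algebraic_int.intros)
  have A: "(map_mat of_int B :: 'a mat) \<in> carrier_mat n n"
    using B by simp
  show "lead_coeff (char_poly (map_mat of_int B :: 'a mat)) = 1"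
    using degree_monic_char_poly[OF A] by simp
  show "\<forall>i. coeff (char_poly (map_mat of_int B :: 'a mat)) i \<in> \<int>"
    by (simp add: of_int_hom.char_poly_hom[OF B] coeff_map_poly)
  show "poly (char_poly (map_mat of_int B :: 'a mat)) k = 0"
    using ev eigenvalue_root_char_poly[OF A] by simp
qed

lemma eigenvalue_zero_mat:
  assumes "eigenvalue (0\<^sub>m n n :: 'a :: field mat) k"
  shows "k = 0"
proof -
  obtain v where v: "v \<in> carrier_vec n" "v \<noteq> 0\<^sub>v n" "0\<^sub>m n n *\<^sub>v v = k \<cdot>\<^sub>v v"
    using assms by (auto simp: eigenvalue_def eigenvector_def)
  then obtain i where "i < n" and "v $ i \<noteq> 0"
    by (auto simp: vec_eq_iff)
  have "k * v $ i = (0\<^sub>m n n *\<^sub>v v) $ i"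
    using v \<open>i < n\<close> by simp
  also have "\<dots> = 0"
    using v(1) \<open>i < n\<close> by (simp add: scalar_prod_def)
  finally show ?thesis
    using \<open>v $ i \<noteq> 0\<close> by simp
qed

lemma circulant_adj_eq_map_mat_of_int:
  "circulant_adj n S = map_mat of_int (circulant_mat n (\<lambda>m. of_bool (m \<in> S)))"
  by (rule eq_matI) (auto simp: circulant_adj_def circulant_mat_def)

lemma algebraic_int_eigenvalue_circulant_adj:
  "eigenvalue (circulant_adj n S) k \<Longrightarrow> algebraic_int k"
  unfolding circulant_adj_eq_map_mat_of_int
  by (rule algebraic_int_eigenvalue_of_int_mat[of _ n]) (auto simp: circulant_mat_def)

lemma eigenvalue_circulant_adj:
  "n > 0 \<Longrightarrow> eigenvalue (circulant_adj n S) (circulant_eigenvalue n (\<lambda>m. of_bool (m \<in> S)) j)"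
  using eigenvalue_circulant_mat[of n "\<lambda>m. of_bool (m \<in> S)" j]
  by (simp add: circulant_adj_eq_map_mat_of_int map_mat_circulant_mat comp_def)

lemma eigenvalue_card_circulant_adj:
  assumes "circulant_symbol n S" and "n > 0"
  shows "eigenvalue (circulant_adj n S) (of_nat (card S))"
proof -
  have "S \<subseteq> {..<n}"
    using assms(1) by (auto simp: circulant_symbol_def)
  then show ?thesis
    using eigenvalue_circulant_adj[OF assms(2), of S 0]
    by (simp add: circulant_eigenvalue_def Int_absorb1)
qed

lemma sum_circulant_adj_eigenvalues:
  assumes "circulant_symbol n S" and "n > 0"
  shows "(\<Sum>j<n. circulant_eigenvalue n (\<lambda>m. of_bool (m \<in> S)) j) = 0"
  using assms by (auto simp: circulant_symbol_def sum_circulant_eigenvalues)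

lemma subset_Rats_if_difference_ratios_rational:
  fixes E :: "'a :: field_char_0 set"
  assumes ratios: "\<And>x y u v. x \<in> E \<Longrightarrow> y \<in> E \<Longrightarrow> u \<in> E \<Longrightarrow> v \<in> E \<Longrightarrow> u \<noteq> v \<Longrightarrow>
                     (x - y) / (u - v) \<in> \<rat>"
    and a: "a \<in> E" "a \<in> \<rat>"
    and J: "finite J" "x ` J \<subseteq> E"
    and sum_Rats: "(\<Sum>j\<in>J. x j) \<in> \<rat>"
    and sum_neq: "(\<Sum>j\<in>J. x j) \<noteq> of_nat (card J) * a"
  shows "E \<subseteq> \<rat>"
proof
  fix k assume k: "k \<in> E"
  show "k \<in> \<rat>"
  proof (cases "k = a")
    case True
    with a show ?thesis by simp
  next
    case False
    define d where "d = k - a"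
    have "d \<noteq> 0"
      using False by (simp add: d_def)
    define q where "q j = (x j - a) / d" for j
    have q_Rats: "q j \<in> \<rat>" if "j \<in> J" for j
      unfolding q_def d_def using ratios a k J that False by blast
    define D where "D = (\<Sum>j\<in>J. x j) - of_nat (card J) * a"
    have D: "D = d * (\<Sum>j\<in>J. q j)"
      using \<open>d \<noteq> 0\<close> by (simp add: D_def q_def sum_distrib_left sum_subtractf)
    have "D \<noteq> 0"
      using sum_neq by (simp add: D_def)
    with D have "d = D / (\<Sum>j\<in>J. q j)"
      by (simp add: field_simps)
    moreover have "D \<in> \<rat>"
      using sum_Rats a by (simp add: D_def)
    moreover have "(\<Sum>j\<in>J. q j) \<in> \<rat>"
      using q_Rats by (simp add: Rats_sum)
    ultimately have "d \<in> \<rat>"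
      by simp
    moreover have "k = a + d"
      by (simp add: d_def)
    ultimately show ?thesis
      using a by simp
  qed
qed

theorem theorem1:
  fixes n :: nat and S :: "nat set"
  assumes "n \<ge> 4"
    and "circulant_symbol n S"
    and "card {k. eigenvalue (circulant_adj n S) k} \<ge> 4"
    and "\<And>li lj lr ls. eigenvalue (circulant_adj n S) li \<Longrightarrow> eigenvalue (circulant_adj n S) lj \<Longrightarrow>
           eigenvalue (circulant_adj n S) lr \<Longrightarrow> eigenvalue (circulant_adj n S) ls \<Longrightarrow>
           lr \<noteq> ls \<Longrightarrow> (li - lj) / (lr - ls) \<in> \<rat>"
  shows "\<forall>k. eigenvalue (circulant_adj n S) k \<longrightarrow> k \<in> \<int>"
proof (cases "S = {}")
  case True
  then have "circulant_adj n S = 0\<^sub>m n n"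
    by (auto simp: circulant_adj_def)
  then show ?thesis
    by (auto dest: eigenvalue_zero_mat)
next
  case False
  let ?\<mu> = "circulant_eigenvalue n (\<lambda>m. of_bool (m \<in> S))"
  have n: "n > 0"
    using assms(1) by simp
  have "card S > 0"
    using False assms(2) finite_subset[of S "{1..<n}"] by (auto simp: circulant_symbol_def card_gt_0_iff)
  note eigenvalues = eigenvalue_circulant_adj[OF n] eigenvalue_card_circulant_adj[OF assms(2) n]
  note trace = sum_circulant_adj_eigenvalues[OF assms(2) n]
  have "{k. eigenvalue (circulant_adj n S) k} \<subseteq> \<rat>"
  proof (rule subset_Rats_if_difference_ratios_rational[where x = ?\<mu> and J = "{..<n}" and a = "of_nat (card S)"])
    show "(\<Sum>j<n. ?\<mu> j) \<noteq> of_nat (card {..<n}) * of_nat (card S)"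
      using trace n \<open>card S > 0\<close> by simp
  qed (use assms(4) eigenvalues trace in auto)
  then show ?thesis
    by (blast intro: rational_algebraic_int_is_int algebraic_int_eigenvalue_circulant_adj)
qed

end
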